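(* Let $\gamma>0$, $C\ge1$, and let the rows $q_1,q_2,\ldots$ (row vectors in $\mathbb{R}^N$) of an $m\times N$ real matrix $Q$ arrive online. Suppose there is an online algorithm that outputs a sequence of positive semidefinite $N\times N$ matrices $X_0,X_1,X_2,\ldots$ which, at each time step $t\ge1$, either reports that there is no positive semidefinite matrix $X$ with $\mathrm{tr}(X)\le\gamma^2N$ and $X\succeq q_i^Tq_i$ for all $i\in[t]$, or else outputs a new positive semidefinite matrix $X_t$ such that $X_t\succeq X_{t-1}$, $X_t\succeq q_t^Tq_t$, and $\mathrm{tr}(X_t)\le C^2\gamma^2N$. Then there exists an online factorization algorithm that solves the $(\gamma,C)$-bounded online average factorization problem for $Q$.
   Context: $A\succeq B$ means $A-B$ is positive semidefinite. For a matrix, $\|L\|_{2\to\infty}$ is the maximum $\ell_2$ norm of a row, $\|R\|_{1\to2}$ the maximum $\ell_2$ norm of a column, $\|R\|_F$ the Frobenius norm, and $\gamma_2(A)=\min\{\|L\|_{2\to\infty}\|R\|_{1\to2}:LR=A\}$; $Q_t$ is the first $t$ rows of $Q$. The $(\gamma,C)$-bounded online average factorization problem: the algorithm chooses an initial (possibly empty) matrix $R_0$ with $N$ columns; at each time $t\ge1$ it receives $q_t$ and must either (i) form $R_t$ by appending rows to $R_{t-1}$ and output a row $\ell_t$ with $\ell_tR_t=q_t$, such that $\|R_t\|_F\le\sqrt N$ and $\|L_t\|_{2\to\infty}\le C\gamma$ (where $L_t$ has zero-padded rows $\ell_1,\ldots,\ell_t$), or (ii) (correctly) assert that $\gamma_2(Q_t)>\gamma$.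 *)

theory Defs
  imports "HOL-Analysis.Analysis"
begin

text \<open>Row vectors in R^N are elements of real^'n (N = CARD('n)); N x N matrices
are real^'n^'n. A matrix with N columns and some number of rows is represented
by the list of its rows.\<close>

definition psd :: "real^'n^'n \<Rightarrow> bool" where
  "psd X \<longleftrightarrow> transpose X = X \<and> (\<forall>x. 0 \<le> x \<bullet> (X *v x))"

definition loewner_ge :: "real^'n^'n \<Rightarrow> real^'n^'n \<Rightarrow> bool" (infix "\<succeq>\<^sub>L" 50) where
  "A \<succeq>\<^sub>L B \<longleftrightarrow> psd (A - B)"

definition outer :: "real^'n \<Rightarrow> real^'n^'n" where
  "outer q = (\<chi> i j. q $ i * q $ j)"

text \<open>gamma_2 of the t x N matrix whose rows are the list qs:
  min of ||L||_{2->inf} ||R||_{1->2} over factorizations L R = Q with arbitrary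
  inner dimension k; L is t x k (entries L i j, i<t, j<k), R is k x N (rows R j, j<k).\<close>
definition norm_2inf :: "nat \<Rightarrow> nat \<Rightarrow> (nat \<Rightarrow> nat \<Rightarrow> real) \<Rightarrow> real" where
  "norm_2inf t k L = Max (insert 0 {sqrt (\<Sum>j<k. (L i j)\<^sup>2) | i. i < t})"

definition norm_12 :: "nat \<Rightarrow> (nat \<Rightarrow> real^'n) \<Rightarrow> real" where
  "norm_12 k R = Max (insert 0 {sqrt (\<Sum>j<k. (R j $ c)\<^sup>2) | c. c \<in> (UNIV :: 'n set)})"

definition gamma2 :: "(real^'n) list \<Rightarrow> real" where
  "gamma2 qs = Inf {norm_2inf (length qs) k L * norm_12 k R | k L R.
      \<forall>i < length qs. (\<Sum>j<k. L i j *\<^sub>R R j) = qs ! i}"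

text \<open>The output at time t
is A (take t qs) (so it depends only on q_1..q_t); A [] is X_0; None means
"report infeasibility". The run stops at the first report.\<close>
definition sdp_valid ::
  "real \<Rightarrow> real \<Rightarrow> ((real^'n) list \<Rightarrow> (real^'n^'n) option) \<Rightarrow> (real^'n) list \<Rightarrow> bool" where
  "sdp_valid \<gamma> C A qs \<longleftrightarrow>
     (\<exists>X0. A [] = Some X0 \<and> psd X0) \<and>
     (\<forall>t \<in> {1..length qs}.
        (\<forall>s \<in> {1..<t}. A (take s qs) \<noteq> None) \<longrightarrow>
        (A (take t qs) = None \<and>
           \<not> (\<exists>X. psd X \<and> trace X \<le> \<gamma>\<^sup>2 * real CARD('n) \<and>
                  (\<forall>i < t. X \<succeq>\<^sub>L outer (qs ! i))))
        \<or> (\<exists>X. A (take t qs) = Some X \<and> psd X \<and>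
                X \<succeq>\<^sub>L the (A (take (t - 1) qs)) \<and>
                X \<succeq>\<^sub>L outer (qs ! (t - 1)) \<and>
                trace X \<le> C\<^sup>2 * \<gamma>\<^sup>2 * real CARD('n)))"

text \<open>Validity of an online factorization algorithm on input rows qs: R0 is the
initial matrix (list of rows); F (take t qs) is the output at time t, either None
(assert gamma2(Q_t) > gamma) or Some (R_t, l_t). The run stops at the first assertion.\<close>
definition fact_R ::
  "(real^'n) list \<Rightarrow> ((real^'n) list \<Rightarrow> ((real^'n) list \<times> real list) option)
     \<Rightarrow> (real^'n) list \<Rightarrow> nat \<Rightarrow> (real^'n) list" where
  "fact_R R0 F qs t = (if t = 0 then R0 else fst (the (F (take t qs))))"

definition fact_l ::
  "((real^'n) list \<Rightarrow> ((real^'n) list \<times> real list) option)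
     \<Rightarrow> (real^'n) list \<Rightarrow> nat \<Rightarrow> real list" where
  "fact_l F qs t = snd (the (F (take t qs)))"

definition fact_valid ::
  "real \<Rightarrow> real \<Rightarrow> (real^'n) list \<Rightarrow> ((real^'n) list \<Rightarrow> ((real^'n) list \<times> real list) option)
     \<Rightarrow> (real^'n) list \<Rightarrow> bool" where
  "fact_valid \<gamma> C R0 F qs \<longleftrightarrow>
     (\<forall>t \<in> {1..length qs}.
        (\<forall>s \<in> {1..<t}. F (take s qs) \<noteq> None) \<longrightarrow>
        (F (take t qs) = None \<and> gamma2 (take t qs) > \<gamma>)
        \<or> (F (take t qs) \<noteq> None \<and>
           (\<exists>D. fact_R R0 F qs t = fact_R R0 F qs (t - 1) @ D) \<and>
           length (fact_l F qs t) = length (fact_R R0 F qs t) \<and>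
           (\<Sum>j < length (fact_R R0 F qs t).
               fact_l F qs t ! j *\<^sub>R fact_R R0 F qs t ! j) = qs ! (t - 1) \<and>
           sqrt (\<Sum>j < length (fact_R R0 F qs t). (norm (fact_R R0 F qs t ! j))\<^sup>2)
               \<le> sqrt (real CARD('n)) \<and>
           (\<forall>s \<in> {1..t}. sqrt (\<Sum>j < length (fact_l F qs s). (fact_l F qs s ! j)\<^sup>2)
               \<le> C * \<gamma>)))"

end

(* Run the SDP algorithm and factor its iterates incrementally, with c = C \<gamma>.  Each increment
   X_s - X_(s-1) is positive semidefinite, hence equal to c^2 times a sum of outer products
   r^T r (found by repeated rank-one Schur complements); appending these rows r to R_(s-1)
   gives R_s with c^2 R_s^T R_s = X_s.  So ||R_t||_F^2 = tr X_t / c^2 \<le> N, and X_t \<succeq> q_t^T q_t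
   says |q_t y| \<le> c ||R_t y|| for all y, which puts q_t = l_t R_t with ||l_t|| \<le> c.
   When the SDP algorithm reports infeasibility, \<gamma>_2(Q_t) > \<gamma>: every factorization Q_t = L R
   yields the feasible point ||L||_(2->inf)^2 R^T R of trace at most
   (||L||_(2->inf) ||R||_(1->2))^2 N, and compactness of the feasible sets passes to the infimum. *)

theory Submission
  imports Defs
begin

lemma symmetric_form_commute:
  fixes M :: "real^'n^'n"
  assumes "transpose M = M"
  shows "x \<bullet> (M *v y) = y \<bullet> (M *v x)"
proof -
  have "x \<bullet> (M *v y) = (transpose M *v x) \<bullet> y" by (simp add: dot_lmul_matrix)
  then show ?thesis using assms by (simp add: inner_commute)
qed

lemma nonneg_quadratic_discriminant:
  fixes a b c :: real
  assumes "0 \<le> c" and nonneg: "\<And>l. 0 \<le> a + 2*l*b + l^2*c"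
  shows "b^2 \<le> a*c"
proof (cases "c = 0")
  case True
  have "b = 0"
  proof (rule ccontr)
    assume "b \<noteq> 0"
    then have "a + 2*(-(a+1)/(2*b))*b + (-(a+1)/(2*b))^2*c = -1"
      using True by (simp add: field_simps)
    then show False using nonneg[of "-(a+1)/(2*b)"] by simp
  qed
  then show ?thesis using True by simp
next
  case False
  then have "c > 0" using \<open>0 \<le> c\<close> by simp
  have "0 \<le> a + 2*(-b/c)*b + (-b/c)^2*c" by (rule nonneg)
  also have "\<dots> = (a*c - b^2)/c" using \<open>c > 0\<close> by (simp add: field_simps power2_eq_square)
  finally show ?thesis using \<open>c > 0\<close> by (simp add: zero_le_divide_iff)
qed

lemma psd_Cauchy_Schwarz:
  fixes M :: "real^'n^'n"
  assumes "psd M"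
  shows "(x \<bullet> (M *v y))^2 \<le> (x \<bullet> (M *v x)) * (y \<bullet> (M *v y))"
proof (rule nonneg_quadratic_discriminant)
  have sym: "transpose M = M" and form: "\<And>z. 0 \<le> z \<bullet> (M *v z)"
    using assms unfolding psd_def by auto
  show "0 \<le> y \<bullet> (M *v y)" by (rule form)
  fix l
  have "(x + l *\<^sub>R y) \<bullet> (M *v (x + l *\<^sub>R y)) =
      x \<bullet> (M *v x) + 2*l*(x \<bullet> (M *v y)) + l^2 * (y \<bullet> (M *v y))"
    using symmetric_form_commute[OF sym, of y x]
    by (simp add: algebra_simps power2_eq_square)
  then show "0 \<le> x \<bullet> (M *v x) + 2*l*(x \<bullet> (M *v y)) + l^2 * (y \<bullet> (M *v y))"
    by (metis form)
qed

lemma inner_axis_mult_axis: "axis i 1 \<bullet> ((M::real^'n^'m) *v axis j 1) = M$i$j"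
  unfolding inner_axis' by (simp add: matrix_vector_mult_def axis_def if_distrib[of "\<lambda>t. t * _"]
      mult.commute[of _ "if _ then _ else _"] cong: if_cong)

lemma psd_diag_nonneg: "psd M \<Longrightarrow> 0 \<le> M$i$i"
  using inner_axis_mult_axis[of i M i] unfolding psd_def by metis

lemma psd_entry_sq_le: "psd M \<Longrightarrow> (M$i$j)^2 \<le> M$i$i * M$j$j"
  using psd_Cauchy_Schwarz[of M "axis i 1" "axis j 1"] by (simp add: inner_axis_mult_axis)

lemma psd_diag_zero: "psd M \<Longrightarrow> M$i$i = 0 \<Longrightarrow> M$i$j = 0"
  using psd_entry_sq_le[of M i j] by simp

lemma transpose_add: "transpose (A + B) = transpose A + transpose (B :: 'a::semiring_1^'n^'m)"
  by (simp add: transpose_def vec_eq_iff)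

lemma transpose_diff: "transpose (A - B) = transpose A - transpose (B :: 'a::ring_1^'n^'m)"
  by (simp add: transpose_def vec_eq_iff)

lemma psd_zero [simp]: "psd 0"
  by (simp add: psd_def transpose_def vec_eq_iff)

lemma psd_add: "psd A \<Longrightarrow> psd B \<Longrightarrow> psd (A + B)"
  by (simp add: psd_def transpose_add matrix_vector_mult_add_rdistrib inner_add_right)

lemma psd_scaleR: "psd A \<Longrightarrow> 0 \<le> a \<Longrightarrow> psd (a *\<^sub>R A)"
  by (auto simp: psd_def transpose_def vec_eq_iff scaleR_matrix_vector_assoc[symmetric])

lemma outer_mult_vec: "outer q *v y = (q \<bullet> y) *\<^sub>R q"
  by (simp add: vec_eq_iff outer_def matrix_vector_mult_def inner_vec_def sum_distrib_left mult_ac)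

lemma transpose_outer [simp]: "transpose (outer q) = outer q"
  by (simp add: vec_eq_iff outer_def transpose_def mult.commute)

lemma psd_outer: "psd (outer q)"
  by (simp add: psd_def outer_mult_vec) (metis inner_commute zero_le_square)

lemma loewner_ge_outer_iff:
  assumes "transpose X = X"
  shows "X \<succeq>\<^sub>L outer q \<longleftrightarrow> (\<forall>y. (q \<bullet> y)^2 \<le> y \<bullet> (X *v y))"
proof -
  have "transpose (X - outer q) = X - outer q"
    using assms by (simp add: transpose_diff)
  moreover have "y \<bullet> ((X - outer q) *v y) = y \<bullet> (X *v y) - (q \<bullet> y)^2" for y
    by (simp add: matrix_vector_mult_diff_rdistrib inner_diff_right outer_mult_vec
        power2_eq_square inner_commute[of y q])
  ultimately show ?thesis unfolding loewner_ge_def psd_def by simp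
qed

lemma trace_scaleR: "trace (a *\<^sub>R X) = a * trace (X :: real^'n^'n)"
  by (simp add: trace_def sum_distrib_left)

lemma trace_outer: "trace (outer q) = (norm q)^2"
  by (simp add: trace_def outer_def power2_norm_eq_inner inner_vec_def)

definition gram :: "(real^'n) list \<Rightarrow> real^'n^'n" where
  "gram rs = sum_list (map outer rs)"

lemma gram_Nil [simp]: "gram [] = 0"
  and gram_Cons [simp]: "gram (r # rs) = outer r + gram rs"
  and gram_append [simp]: "gram (xs @ ys) = gram xs + gram ys"
  by (simp_all add: gram_def)

lemma psd_gram: "psd (gram rs)"
  by (induction rs) (simp_all add: psd_add psd_outer)

lemma gram_mult_vec: "gram rs *v y = (\<Sum>j<length rs. (rs!j \<bullet> y) *\<^sub>R rs!j)"
proof -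
  have "gram rs *v y = sum_list (map (\<lambda>r. (r \<bullet> y) *\<^sub>R r) rs)"
    by (induction rs) (simp_all add: matrix_vector_mult_add_rdistrib outer_mult_vec)
  then show ?thesis by (simp add: sum_list_sum_nth atLeast0LessThan)
qed

lemma gram_form: "y \<bullet> (gram rs *v y) = (\<Sum>j<length rs. (rs!j \<bullet> y)^2)"
  by (simp add: gram_mult_vec inner_sum_right power2_eq_square inner_commute)

lemma trace_gram: "trace (gram rs) = (\<Sum>j<length rs. (norm (rs!j))^2)"
proof -
  have "trace (gram rs) = sum_list (map (\<lambda>r. (norm r)^2) rs)"
    by (induction rs) (simp_all add: trace_add trace_outer, simp add: trace_def)
  then show ?thesis by (simp add: sum_list_sum_nth atLeast0LessThan)
qed

lemma psd_Schur_step: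
  fixes D :: "real^'n^'n"
  assumes "psd D" and "0 < D$i$i"
  defines "r \<equiv> (1 / sqrt (D$i$i)) *\<^sub>R (D *v axis i 1)"
  shows "psd (D - outer r)" and "(D - outer r)$j$j = D$j$j - (D$j$i)^2 / D$i$i"
proof -
  have sym: "transpose D = D" using assms(1) by (simp add: psd_def)
  have r_entry: "r$k = D$k$i / sqrt (D$i$i)" for k
    unfolding r_def using inner_axis_mult_axis[of k D i] by (simp add: inner_axis')
  show "(D - outer r)$j$j = D$j$j - (D$j$i)^2 / D$i$i"
    using assms(2) by (simp add: outer_def r_entry power2_eq_square)
  have "D \<succeq>\<^sub>L outer r"
  proof (subst loewner_ge_outer_iff[OF sym], intro allI)
    fix x
    have "(r \<bullet> x)^2 = (x \<bullet> (D *v axis i 1))^2 / D$i$i"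
      using assms(2) by (simp add: r_def inner_commute power_divide power_mult_distrib)
    also have "\<dots> \<le> x \<bullet> (D *v x)"
      using psd_Cauchy_Schwarz[OF assms(1), of x "axis i 1"] assms(2)
      by (simp add: inner_axis_mult_axis divide_le_eq)
    finally show "(r \<bullet> x)^2 \<le> x \<bullet> (D *v x)" .
  qed
  then show "psd (D - outer r)" by (simp add: loewner_ge_def)
qed

lemma psd_eq_gram: "psd D \<Longrightarrow> \<exists>rs. gram rs = D"
proof (induction D rule: measure_induct_rule[where f = "\<lambda>D. card {i. D$i$i \<noteq> 0}"])
  case (less D)
  show ?case
  proof (cases "\<exists>i. D$i$i \<noteq> 0")
    case False
    then have "D = 0" using psd_diag_zero[OF less.prems] by (auto simp: vec_eq_iff)
    then show ?thesis by (metis gram_Nil)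
  next
    case True
    then obtain i where "D$i$i \<noteq> 0" by blast
    then have d: "0 < D$i$i" using psd_diag_nonneg[OF less.prems, of i] by linarith
    define r where "r = (1 / sqrt (D$i$i)) *\<^sub>R (D *v axis i 1)"
    have psd': "psd (D - outer r)" and diag': "\<And>j. (D - outer r)$j$j = D$j$j - (D$j$i)^2 / D$i$i"
      using psd_Schur_step[OF less.prems d] unfolding r_def by auto
    have "(D - outer r)$i$i = 0" using diag'[of i] d by (simp add: power2_eq_square)
    moreover have "(D - outer r)$j$j = 0" if "D$j$j = 0" for j
      using diag'[of j] psd_diag_zero[OF less.prems that] by simp
    ultimately have "{j. (D - outer r)$j$j \<noteq> 0} \<subset> {j. D$j$j \<noteq> 0}"
      using \<open>D$i$i \<noteq> 0\<close> by blast
    then have "card {j. (D - outer r)$j$j \<noteq> 0} < card {j. D$j$j \<noteq> 0}"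
      by (simp add: psubset_card_mono)
    then obtain rs where "gram rs = D - outer r" using less.IH psd' by blast
    then have "gram (r # rs) = D" by simp
    then show ?thesis by blast
  qed
qed

lemma in_range_if_orthogonal_to_kernel:
  fixes M :: "real^'n^'n"
  assumes sym: "transpose M = M" and kernel: "\<And>y. M *v y = 0 \<Longrightarrow> q \<bullet> y = 0"
  shows "\<exists>x. M *v x = q"
proof -
  obtain y z where y: "y \<in> span (range ((*v) M))"
    and z: "\<And>w. w \<in> span (range ((*v) M)) \<Longrightarrow> orthogonal z w" and q: "q = y + z"
    using orthogonal_subspace_decomp_exists by blast
  have "(M *v z) \<bullet> w = 0" for w
    using z[of "M *v w"] symmetric_form_commute[OF sym, of w z]
    by (simp add: span_base orthogonal_def inner_commute)
  then have "M *v z = 0" by (metis inner_eq_zero_iff)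
  then have "q \<bullet> z = 0" by (rule kernel)
  moreover have "y \<bullet> z = 0" using z[OF y] by (simp add: orthogonal_def inner_commute)
  ultimately have "q = y" using q by (simp add: inner_add_left)
  then have "q \<in> span (range ((*v) M))" using y by simp
  also have "\<dots> = (*v) M ` span UNIV" by (simp add: span_linear_image)
  finally show ?thesis by blast
qed

lemma bounded_coefficients_exist:
  fixes rs :: "(real^'n) list"
  assumes "c > 0" and "c^2 *\<^sub>R gram rs \<succeq>\<^sub>L outer q"
  shows "\<exists>l. length l = length rs \<and> (\<Sum>j<length rs. l!j *\<^sub>R rs!j) = q \<and>
    sqrt (\<Sum>j<length rs. (l!j)^2) \<le> c"
proof -
  let ?G = "gram rs"
  have sym: "transpose ?G = ?G" using psd_gram unfolding psd_def by blast
  have dom: "(q \<bullet> y)^2 \<le> c^2 * (y \<bullet> (?G *v y))" for y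
    using assms(2) loewner_ge_outer_iff[of "c^2 *\<^sub>R ?G" q] sym
    by (simp add: transpose_scalar scaleR_matrix_vector_assoc[symmetric])
  have "\<exists>x. ?G *v x = (1/c) *\<^sub>R q"
  proof (rule in_range_if_orthogonal_to_kernel[OF sym])
    fix y assume "?G *v y = 0"
    then have "(q \<bullet> y)^2 \<le> 0" using dom[of y] by simp
    then show "((1/c) *\<^sub>R q) \<bullet> y = 0" by simp
  qed
  then obtain x where x: "?G *v x = (1/c) *\<^sub>R q" by blast
  define l where "l = map (\<lambda>r. c * (r \<bullet> x)) rs"
  have "(\<Sum>j<length rs. l!j *\<^sub>R rs!j) = c *\<^sub>R (?G *v x)"
    by (simp add: l_def gram_mult_vec scaleR_sum_right)
  also have "\<dots> = q" using x assms(1) by simp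
  finally have combination: "(\<Sum>j<length rs. l!j *\<^sub>R rs!j) = q" .
  have form_x: "c^2 * (x \<bullet> (?G *v x)) = c * (q \<bullet> x)"
    using x assms(1) by (simp add: power2_eq_square inner_commute)
  have "(\<Sum>j<length rs. (l!j)^2) = c^2 * (x \<bullet> (?G *v x))"
    by (simp add: l_def gram_form sum_distrib_left power_mult_distrib)
  also have "\<dots> = c * (q \<bullet> x)" by (rule form_x)
  finally have norm_l: "(\<Sum>j<length rs. (l!j)^2) = c * (q \<bullet> x)" .
  have "(q \<bullet> x)^2 \<le> c * (q \<bullet> x)" using dom[of x] form_x by simp
  then have "q \<bullet> x \<le> c"
    using assms(1) by (cases "0 < q \<bullet> x") (auto simp: power2_eq_square mult_le_cancel_right)
  then have "sqrt (\<Sum>j<length rs. (l!j)^2) \<le> c"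
    using norm_l assms(1) by (intro real_le_lsqrt) (simp_all add: power2_eq_square)
  moreover have "length l = length rs" by (simp add: l_def)
  ultimately show ?thesis using combination by blast
qed

lemma norm_2inf_ge: "i < t \<Longrightarrow> sqrt (\<Sum>j<k. (L i j)^2) \<le> norm_2inf t k L"
  unfolding norm_2inf_def by (rule Max_ge) auto

lemma norm_2inf_nonneg: "0 \<le> norm_2inf t k L"
  unfolding norm_2inf_def by (rule Max_ge) auto

lemma norm_12_ge: "sqrt (\<Sum>j<k. (R j $ c)^2) \<le> norm_12 k R"
  unfolding norm_12_def by (rule Max_ge) (auto simp: full_SetCompr_eq)

lemma norm_12_nonneg: "0 \<le> norm_12 k R"
  unfolding norm_12_def by (rule Max_ge) (auto simp: full_SetCompr_eq)

definition sdp_feasible :: "real \<Rightarrow> (real^'n) list \<Rightarrow> (real^'n^'n) set" where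
  "sdp_feasible b ps = {X. psd X \<and> trace X \<le> b \<and> (\<forall>i<length ps. X \<succeq>\<^sub>L outer (ps ! i))}"

lemma sdp_feasible_mono: "b \<le> b' \<Longrightarrow> sdp_feasible b ps \<subseteq> sdp_feasible b' ps"
  by (auto simp: sdp_feasible_def)

lemma factorization_feasible:
  fixes R :: "nat \<Rightarrow> real^'n"
  assumes factorization: "\<forall>i<length ps. (\<Sum>j<k. L i j *\<^sub>R R j) = ps ! i"
  shows "(norm_2inf (length ps) k L)^2 *\<^sub>R gram (map R [0..<k])
    \<in> sdp_feasible ((norm_2inf (length ps) k L * norm_12 k R)^2 * real CARD('n)) ps"
proof -
  let ?a = "norm_2inf (length ps) k L" and ?b = "norm_12 k R"
  define X where "X = ?a^2 *\<^sub>R gram (map R [0..<k])"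
  have "psd X" by (simp add: X_def psd_scaleR psd_gram)
  then have sym: "transpose X = X" by (simp add: psd_def)
  have form: "y \<bullet> (X *v y) = ?a^2 * (\<Sum>j<k. (R j \<bullet> y)^2)" for y
    by (simp add: X_def scaleR_matrix_vector_assoc[symmetric] gram_form)
  have "trace (gram (map R [0..<k])) = (\<Sum>c\<in>UNIV. \<Sum>j<k. (R j $ c)^2)"
    by (simp add: trace_gram power2_norm_eq_inner inner_vec_def sum.swap[of _ "{..<k}"]
        flip: power2_eq_square)
  also have "\<dots> \<le> (\<Sum>c\<in>(UNIV::'n set). ?b^2)"
    by (intro sum_mono sqrt_le_D norm_12_ge)
  finally have "trace X \<le> ?a^2 * (real CARD('n) * ?b^2)"
    by (simp add: X_def trace_scaleR mult_left_mono)
  then have trace: "trace X \<le> (?a * ?b)^2 * real CARD('n)"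
    by (simp add: power_mult_distrib mult_ac)
  have "X \<succeq>\<^sub>L outer (ps ! i)" if "i < length ps" for i
  proof (subst loewner_ge_outer_iff[OF sym], intro allI)
    fix y
    have "ps ! i = (\<Sum>j<k. L i j *\<^sub>R R j)" using factorization that by simp
    then have "ps ! i \<bullet> y = (\<Sum>j<k. L i j * (R j \<bullet> y))" by (simp add: inner_sum_left)
    then have "(ps ! i \<bullet> y)^2 \<le> (\<Sum>j<k. (L i j)^2) * (\<Sum>j<k. (R j \<bullet> y)^2)"
      using Cauchy_Schwarz_ineq_sum[of "\<lambda>j. L i j" "\<lambda>j. R j \<bullet> y" "{..<k}"] by simp
    also have "\<dots> \<le> ?a^2 * (\<Sum>j<k. (R j \<bullet> y)^2)"
      by (intro mult_right_mono sqrt_le_D norm_2inf_ge that) (simp add: sum_nonneg)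
    finally show "(ps ! i \<bullet> y)^2 \<le> y \<bullet> (X *v y)" by (simp add: form)
  qed
  then show ?thesis using \<open>psd X\<close> trace unfolding sdp_feasible_def X_def by blast
qed

lemma gamma2_witness:
  assumes "gamma2 ps < b"
  obtains k L R where "\<forall>i<length ps. (\<Sum>j<k. L i j *\<^sub>R R j) = ps ! i"
    and "norm_2inf (length ps) k L * norm_12 k R < b"
proof -
  let ?S = "{norm_2inf (length ps) k L * norm_12 k R | k L R.
      \<forall>i < length ps. (\<Sum>j<k. L i j *\<^sub>R R j) = ps ! i}"
  define L :: "nat \<Rightarrow> nat \<Rightarrow> real" where "L i j = (if i = j then 1 else 0)" for i j
  have "L i j *\<^sub>R ps ! j = (if j = i then ps ! i else 0)" for i j
    by (simp add: L_def)
  then have "\<forall>i < length ps. (\<Sum>j<length ps. L i j *\<^sub>R ps ! j) = ps ! i"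
    by simp
  then have "?S \<noteq> {}" by blast
  then show ?thesis using cInf_lessD[of ?S b] assms that unfolding gamma2_def by blast
qed

lemma continuous_on_matrix_entry: "continuous_on S (\<lambda>X::real^'n^'m. X$i$j)"
  unfolding continuous_on_def by (auto intro!: tendsto_vec_nth tendsto_ident_at)

lemma closed_loewner_ge: "closed {X::real^'n^'n. X \<succeq>\<^sub>L B}"
proof -
  have set_eq: "{X::real^'n^'n. X \<succeq>\<^sub>L B} =
      (\<Inter>i. \<Inter>j. {X. (X - B)$i$j - (X - B)$j$i = 0}) \<inter> (\<Inter>x. {X. 0 \<le> x \<bullet> ((X - B) *v x)})"
    by (auto simp: loewner_ge_def psd_def vec_eq_iff transpose_def)
  have "closed {X::real^'n^'n. (X - B)$i$j - (X - B)$j$i = 0}" for i j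
    by (intro closed_Collect_eq continuous_intros continuous_on_matrix_entry)
  moreover have "closed {X::real^'n^'n. 0 \<le> x \<bullet> ((X - B) *v x)}" for x
    unfolding inner_vec_def matrix_vector_mult_def
    by (intro closed_Collect_le continuous_intros continuous_on_matrix_entry)
  ultimately show ?thesis unfolding set_eq by (intro closed_Int closed_INT) auto
qed

lemma psd_entry_le_trace:
  assumes "psd X" shows "\<bar>X$i$j\<bar> \<le> trace X"
proof -
  have diag_nonneg: "0 \<le> X$k$k" for k using assms by (rule psd_diag_nonneg)
  have diag_le: "X$k$k \<le> trace X" for k
    unfolding trace_def by (rule member_le_sum) (simp_all add: diag_nonneg)
  have "\<bar>X$i$j\<bar>^2 \<le> X$i$i * X$j$j" using psd_entry_sq_le[OF assms] by simp
  also have "\<dots> \<le> (trace X)^2"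
    using diag_nonneg diag_le by (simp add: power2_eq_square) (intro mult_mono; auto intro: order_trans)
  finally have "\<bar>X$i$j\<bar>^2 \<le> (trace X)^2" .
  moreover have "0 \<le> trace X" using diag_nonneg[of i] diag_le[of i] by linarith
  ultimately show ?thesis by (rule power2_le_imp_le)
qed

lemma compact_sdp_feasible: "compact (sdp_feasible b ps :: (real^'n^'n) set)"
proof (rule compact_eq_bounded_closed[THEN iffD2], rule conjI)
  have "norm X \<le> real CARD('n) * real CARD('n) * b" if "X \<in> sdp_feasible b ps" for X :: "real^'n^'n"
  proof -
    have "psd X" "trace X \<le> b" using that by (simp_all add: sdp_feasible_def)
    have "norm X \<le> (\<Sum>i\<in>UNIV. norm (X$i))" unfolding norm_vec_def by (rule L2_set_le_sum) simp
    also have "\<dots> \<le> (\<Sum>i\<in>UNIV. \<Sum>j\<in>UNIV. \<bar>X$i$j\<bar>)"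
      by (intro sum_mono norm_le_l1_cart)
    also have "\<dots> \<le> (\<Sum>i\<in>(UNIV::'n set). \<Sum>j\<in>(UNIV::'n set). b)"
      by (intro sum_mono order_trans[OF psd_entry_le_trace[OF \<open>psd X\<close>] \<open>trace X \<le> b\<close>])
    finally show ?thesis by simp
  qed
  then show "bounded (sdp_feasible b ps :: (real^'n^'n) set)" unfolding bounded_iff by blast
  have "sdp_feasible b ps = {X. X \<succeq>\<^sub>L 0} \<inter> {X. trace X \<le> b} \<inter> (\<Inter>i<length ps. {X. X \<succeq>\<^sub>L outer (ps ! i)})"
    by (auto simp: sdp_feasible_def loewner_ge_def)
  also have "closed \<dots>"
    unfolding trace_def
    by (intro closed_Int closed_INT ballI closed_loewner_ge closed_Collect_le continuous_intros
        continuous_on_matrix_entry)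
  finally show "closed (sdp_feasible b ps :: (real^'n^'n) set)" .
qed

lemma gamma2_le_imp_feasible:
  fixes ps :: "(real^'n) list"
  assumes "0 \<le> \<gamma>" and "gamma2 ps \<le> \<gamma>"
  shows "sdp_feasible (\<gamma>^2 * real CARD('n)) ps \<noteq> {}"
proof -
  define b where "b m = (\<gamma> + inverse (real (Suc m)))^2 * real CARD('n)" for m
  define F where "F m = sdp_feasible (b m) ps" for m
  have "\<Inter>(range F) \<noteq> {}"
  proof (rule compact_nest)
    show "compact (F m)" for m unfolding F_def by (rule compact_sdp_feasible)
    show "F n \<subseteq> F m" if "m \<le> n" for m n
    proof -
      have "inverse (real (Suc n)) \<le> inverse (real (Suc m))"
        using that by (simp add: le_imp_inverse_le)
      then have "b n \<le> b m"
        unfolding b_def using assms(1) by (intro mult_right_mono power_mono) auto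
      then show ?thesis unfolding F_def by (rule sdp_feasible_mono)
    qed
    show "F m \<noteq> {}" for m
    proof -
      have "gamma2 ps < \<gamma> + inverse (real (Suc m))"
        using assms(2) positive_imp_inverse_positive[of "real (Suc m)"] by linarith
      then obtain k L R where factorization: "\<forall>i<length ps. (\<Sum>j<k. L i j *\<^sub>R R j) = ps ! i"
        and less: "norm_2inf (length ps) k L * norm_12 k R < \<gamma> + inverse (real (Suc m))"
        by (rule gamma2_witness)
      have "0 \<le> norm_2inf (length ps) k L * norm_12 k R"
        by (simp add: norm_2inf_nonneg norm_12_nonneg)
      then have "(norm_2inf (length ps) k L * norm_12 k R)^2 * real CARD('n) \<le> b m"
        unfolding b_def using less by (intro mult_right_mono power_mono) auto
      then show ?thesis
        using factorization_feasible[OF factorization] sdp_feasible_mono unfolding F_def by blast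
    qed
  qed
  then obtain X where X: "\<And>m. X \<in> F m" by blast
  have "b \<longlonglongrightarrow> (\<gamma> + 0)^2 * real CARD('n)"
    unfolding b_def by (intro tendsto_intros LIMSEQ_inverse_real_of_nat)
  moreover have "trace X \<le> b m" for m using X[of m] by (simp add: F_def sdp_feasible_def)
  ultimately have "trace X \<le> \<gamma>^2 * real CARD('n)"
    using LIMSEQ_le_const by force
  then have "X \<in> sdp_feasible (\<gamma>^2 * real CARD('n)) ps"
    using X[of 0] by (simp add: F_def sdp_feasible_def)
  then show ?thesis by blast
qed

definition gram_factor :: "real^'n^'n \<Rightarrow> (real^'n) list" where
  "gram_factor D = (SOME rs. gram rs = D)"

lemma gram_gram_factor: "psd D \<Longrightarrow> gram (gram_factor D) = D"
  unfolding gram_factor_def using psd_eq_gram by (rule someI_ex)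

definition sdp_increment ::
  "((real^'n) list \<Rightarrow> (real^'n^'n) option) \<Rightarrow> (real^'n) list \<Rightarrow> nat \<Rightarrow> real^'n^'n" where
  "sdp_increment A qs s =
    (if s = 0 then the (A []) else the (A (take s qs)) - the (A (take (s - 1) qs)))"

definition factor_rows ::
  "real \<Rightarrow> ((real^'n) list \<Rightarrow> (real^'n^'n) option) \<Rightarrow> (real^'n) list \<Rightarrow> nat \<Rightarrow> (real^'n) list" where
  "factor_rows c A qs t =
    concat (map (\<lambda>s. gram_factor ((1 / c^2) *\<^sub>R sdp_increment A qs s)) [0..<Suc t])"

lemma factor_rows_Suc:
  "factor_rows c A qs (Suc t) =
    factor_rows c A qs t @ gram_factor ((1 / c^2) *\<^sub>R sdp_increment A qs (Suc t))"
  by (simp add: factor_rows_def)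

lemma factor_rows_take: "factor_rows c A (take t qs) t = factor_rows c A qs t"
proof -
  have "sdp_increment A (take t qs) s = sdp_increment A qs s" if "s \<le> t" for s
    using that by (simp add: sdp_increment_def min_absorb1)
  then show ?thesis unfolding factor_rows_def by (auto intro!: arg_cong[where f = concat])
qed

lemma gram_factor_rows:
  assumes "c \<noteq> 0" and "psd (the (A []))"
    and "\<And>s. s \<in> {1..t} \<Longrightarrow> the (A (take s qs)) \<succeq>\<^sub>L the (A (take (s - 1) qs))"
  shows "c^2 *\<^sub>R gram (factor_rows c A qs t) = the (A (take t qs))"
  using assms(3)
proof (induction t)
  case 0
  then show ?case
    using assms(1) gram_gram_factor[OF psd_scaleR[OF assms(2)], of "1 / c^2"]
    by (simp add: factor_rows_def sdp_increment_def)
next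
  case (Suc t)
  have "psd ((1 / c^2) *\<^sub>R sdp_increment A qs (Suc t))"
    using Suc.prems[of "Suc t"] by (simp add: sdp_increment_def loewner_ge_def psd_scaleR)
  then show ?case
    using Suc assms(1) by (simp add: factor_rows_Suc gram_gram_factor scaleR_add_right sdp_increment_def)
qed

definition bounded_coefficients :: "real \<Rightarrow> (real^'n) list \<Rightarrow> real^'n \<Rightarrow> real list" where
  "bounded_coefficients c rs q = (SOME l. length l = length rs \<and>
    (\<Sum>j<length rs. l!j *\<^sub>R rs!j) = q \<and> sqrt (\<Sum>j<length rs. (l!j)^2) \<le> c)"

lemma bounded_coefficients:
  assumes "c > 0" and "c^2 *\<^sub>R gram rs \<succeq>\<^sub>L outer q"
  defines "l \<equiv> bounded_coefficients c rs q"
  shows "length l = length rs \<and> (\<Sum>j<length rs. l!j *\<^sub>R rs!j) = q \<and>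
    sqrt (\<Sum>j<length rs. (l!j)^2) \<le> c"
  unfolding l_def bounded_coefficients_def
  by (rule someI_ex[OF bounded_coefficients_exist[OF assms(1,2)]])

definition online_factorization ::
  "real \<Rightarrow> ((real^'n) list \<Rightarrow> (real^'n^'n) option) \<Rightarrow> (real^'n) list
    \<Rightarrow> ((real^'n) list \<times> real list) option" where
  "online_factorization c A p = (if A p = None then None
    else Some (factor_rows c A p (length p),
               bounded_coefficients c (factor_rows c A p (length p)) (last p)))"

lemma online_factorization_eq_None_iff [simp]:
  "online_factorization c A p = None \<longleftrightarrow> A p = None"
  by (simp add: online_factorization_def)

lemma online_factorization_take:
  assumes "t \<in> {1..length qs}" and "A (take t qs) = Some X"
  shows "online_factorization c A (take t qs) =
    Some (factor_rows c A qs t, bounded_coefficients c (factor_rows c A qs t) (qs ! (t - 1)))"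
proof -
  have "last (take t qs) = qs ! (t - 1)"
    using assms(1) by (cases qs) (auto simp: last_conv_nth min_absorb2)
  then show ?thesis
    using assms factor_rows_take[of c A t qs] by (simp add: online_factorization_def min_absorb2)
qed

lemma fact_R_online_factorization:
  assumes "t \<le> length qs" and "t \<noteq> 0 \<Longrightarrow> A (take t qs) \<noteq> None"
  shows "fact_R (factor_rows c A [] 0) (online_factorization c A) qs t = factor_rows c A qs t"
proof (cases "t = 0")
  case True
  then show ?thesis using factor_rows_take[of c A 0 qs] by (simp add: fact_R_def)
next
  case False
  with assms obtain X where "A (take t qs) = Some X" by blast
  then show ?thesis
    using False assms(1) online_factorization_take[of t qs A X c] by (simp add: fact_R_def)
qed

lemma fact_l_online_factorization:
  assumes "t \<in> {1..length qs}" and "A (take t qs) \<noteq> None"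
  shows "fact_l (online_factorization c A) qs t =
    bounded_coefficients c (factor_rows c A qs t) (qs ! (t - 1))"
proof -
  from assms(2) obtain X where "A (take t qs) = Some X" by blast
  then show ?thesis using online_factorization_take[OF assms(1)] by (simp add: fact_l_def)
qed

lemma sdp_valid_initial: "sdp_valid \<gamma> C A qs \<Longrightarrow> psd (the (A []))"
  unfolding sdp_valid_def by auto

lemma sdp_valid_rejected:
  fixes qs :: "(real^'n) list"
  assumes "\<gamma> > 0" and "sdp_valid \<gamma> C A qs" and t: "t \<in> {1..length qs}"
    and "\<forall>s\<in>{1..<t}. A (take s qs) \<noteq> None" and "A (take t qs) = None"
  shows "\<gamma> < gamma2 (take t qs)"
proof (rule ccontr)
  assume "\<not> \<gamma> < gamma2 (take t qs)"
  then have "sdp_feasible (\<gamma>^2 * real CARD('n)) (take t qs) \<noteq> {}"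
    using assms(1) by (intro gamma2_le_imp_feasible) auto
  moreover have "\<not> (\<exists>X. psd X \<and> trace X \<le> \<gamma>^2 * real CARD('n) \<and> (\<forall>i<t. X \<succeq>\<^sub>L outer (qs ! i)))"
    using mp[OF bspec[OF assms(2)[unfolded sdp_valid_def, THEN conjunct2] t] assms(4)] assms(5)
    by simp
  ultimately show False using t by (auto simp: sdp_feasible_def)
qed

lemma sdp_valid_accepted:
  fixes qs :: "(real^'n) list"
  assumes "sdp_valid \<gamma> C A qs" and "t \<le> length qs"
    and "\<forall>s\<in>{1..t}. A (take s qs) \<noteq> None" and s: "s \<in> {1..t}"
  shows "the (A (take s qs)) \<succeq>\<^sub>L the (A (take (s - 1) qs)) \<and>
    the (A (take s qs)) \<succeq>\<^sub>L outer (qs ! (s - 1)) \<and>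
    trace (the (A (take s qs))) \<le> C^2 * \<gamma>^2 * real CARD('n)"
proof -
  have s_range: "s \<in> {1..length qs}" and prefix: "\<forall>s'\<in>{1..<s}. A (take s' qs) \<noteq> None"
    and "A (take s qs) \<noteq> None" using assms(2-4) by auto
  then obtain X where "A (take s qs) = Some X" "X \<succeq>\<^sub>L the (A (take (s - 1) qs))"
    "X \<succeq>\<^sub>L outer (qs ! (s - 1))" "trace X \<le> C^2 * \<gamma>^2 * real CARD('n)"
    using mp[OF bspec[OF assms(1)[unfolded sdp_valid_def, THEN conjunct2] s_range] prefix]
      \<open>A (take s qs) \<noteq> None\<close> by blast
  then show ?thesis by simp
qed

lemma online_factorization_step:
  fixes qs :: "(real^'n) list"
  assumes "c > 0" and "c = C * \<gamma>" and valid: "sdp_valid \<gamma> C A qs" and t: "t \<in> {1..length qs}"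
    and accepted: "\<forall>s\<in>{1..t}. A (take s qs) \<noteq> None"
  defines "R \<equiv> fact_R (factor_rows c A [] 0) (online_factorization c A) qs"
    and "l \<equiv> fact_l (online_factorization c A) qs"
  shows "(\<exists>D. R t = R (t - 1) @ D) \<and> length (l t) = length (R t) \<and>
    (\<Sum>j<length (R t). l t ! j *\<^sub>R R t ! j) = qs ! (t - 1) \<and>
    sqrt (\<Sum>j<length (R t). (norm (R t ! j))^2) \<le> sqrt (real CARD('n)) \<and>
    (\<forall>s\<in>{1..t}. sqrt (\<Sum>j<length (l s). (l s ! j)^2) \<le> C * \<gamma>)"
proof -
  note accepted_props = sdp_valid_accepted[OF valid _ accepted]
  have gram: "c^2 *\<^sub>R gram (factor_rows c A qs s) = the (A (take s qs))" if "s \<le> t" for s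
    using \<open>c > 0\<close> sdp_valid_initial[OF valid] accepted_props that t
    by (intro gram_factor_rows) auto
  have R: "R s = factor_rows c A qs s" if "s \<le> t" for s
    unfolding R_def using that t accepted by (intro fact_R_online_factorization) auto
  have l: "l s = bounded_coefficients c (factor_rows c A qs s) (qs ! (s - 1))" if "s \<in> {1..t}" for s
    unfolding l_def using that t accepted by (intro fact_l_online_factorization) auto
  have coefficients: "length (l s) = length (R s) \<and>
      (\<Sum>j<length (R s). l s ! j *\<^sub>R R s ! j) = qs ! (s - 1) \<and>
      sqrt (\<Sum>j<length (R s). (l s ! j)^2) \<le> c" if s: "s \<in> {1..t}" for s
  proof -
    have "c^2 *\<^sub>R gram (factor_rows c A qs s) \<succeq>\<^sub>L outer (qs ! (s - 1))"
      using gram[of s] accepted_props[of s] s t by simp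
    then show ?thesis
      using bounded_coefficients[OF \<open>c > 0\<close>] l[OF s] R[of s] s by simp
  qed
  have "c^2 * (\<Sum>j<length (R t). (norm (R t ! j))^2) = trace (the (A (take t qs)))"
    using gram[of t] R[of t] by (simp add: trace_gram[symmetric] trace_scaleR[symmetric])
  also have "\<dots> \<le> c^2 * real CARD('n)"
    using accepted_props[of t] t \<open>c = C * \<gamma>\<close> by (simp add: power_mult_distrib)
  finally have "sqrt (\<Sum>j<length (R t). (norm (R t ! j))^2) \<le> sqrt (real CARD('n))"
    using \<open>c > 0\<close> by simp
  moreover have "R t = R (t - 1) @ gram_factor ((1 / c^2) *\<^sub>R sdp_increment A qs t)"
    using t R[of t] R[of "t - 1"] factor_rows_Suc[of c A qs "t - 1"] by simp
  moreover have "length (l t) = length (R t) \<and> (\<Sum>j<length (R t). l t ! j *\<^sub>R R t ! j) = qs ! (t - 1)"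
    using coefficients[of t] t by simp
  moreover have "\<forall>s\<in>{1..t}. sqrt (\<Sum>j<length (l s). (l s ! j)^2) \<le> C * \<gamma>"
    using coefficients \<open>c = C * \<gamma>\<close> by simp
  ultimately show ?thesis by blast
qed

lemma online_factorization_valid_at:
  fixes qs :: "(real^'n) list"
  assumes "\<gamma> > 0" and "C \<ge> 1" and c: "c = C * \<gamma>" and valid: "sdp_valid \<gamma> C A qs"
    and t: "t \<in> {1..length qs}"
    and prefix: "\<forall>s\<in>{1..<t}. online_factorization c A (take s qs) \<noteq> None"
  defines "R \<equiv> fact_R (factor_rows c A [] 0) (online_factorization c A) qs"
    and "l \<equiv> fact_l (online_factorization c A) qs"
  shows "(online_factorization c A (take t qs) = None \<and> \<gamma> < gamma2 (take t qs)) \<or>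
    (online_factorization c A (take t qs) \<noteq> None \<and>
     (\<exists>D. R t = R (t - 1) @ D) \<and> length (l t) = length (R t) \<and>
     (\<Sum>j<length (R t). l t ! j *\<^sub>R R t ! j) = qs ! (t - 1) \<and>
     sqrt (\<Sum>j<length (R t). (norm (R t ! j))^2) \<le> sqrt (real CARD('n)) \<and>
     (\<forall>s\<in>{1..t}. sqrt (\<Sum>j<length (l s). (l s ! j)^2) \<le> C * \<gamma>))"
proof -
  have prefix_accepted: "\<forall>s\<in>{1..<t}. A (take s qs) \<noteq> None" using prefix by simp
  show ?thesis
  proof (cases "A (take t qs) = None")
    case True
    then show ?thesis using sdp_valid_rejected[OF assms(1) valid t prefix_accepted] by simp
  next
    case False
    have "c > 0" using assms(1,2) c by simp
    have "\<forall>s\<in>{1..t}. A (take s qs) \<noteq> None"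
    proof
      fix s assume "s \<in> {1..t}"
      then have "s \<in> {1..<t} \<or> s = t" by auto
      then show "A (take s qs) \<noteq> None" using prefix_accepted False by blast
    qed
    note step = online_factorization_step[OF \<open>c > 0\<close> c valid t this]
    have "online_factorization c A (take t qs) \<noteq> None" using False by simp
    then show ?thesis unfolding R_def l_def by (rule disjI2[OF conjI[OF _ step]])
  qed
qed

theorem lemma4p2:
  fixes \<gamma> C :: real
    and A :: "(real^'n) list \<Rightarrow> (real^'n^'n) option"
  assumes "\<gamma> > 0" and "C \<ge> 1"
  shows "\<exists>R0 F. \<forall>qs :: (real^'n) list. sdp_valid \<gamma> C A qs \<longrightarrow> fact_valid \<gamma> C R0 F qs"
proof -
  define c where "c = C * \<gamma>"
  have "fact_valid \<gamma> C (factor_rows c A [] 0) (online_factorization c A) qs"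
    if "sdp_valid \<gamma> C A qs" for qs
    unfolding fact_valid_def
    by (intro ballI impI) (rule online_factorization_valid_at[OF assms c_def that])
  then show ?thesis by blast
qed

end
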